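(* Consider a human–algorithm system (as defined in the context). If either $a_i\le h_i$ for all $i\in\{1,\dots,N\}$, or $a_i\ge h_i$ for all $i\in\{1,\dots,N\}$, then the system does not exhibit complementarity.
   Context: A human–algorithm system consists of: an integer $N\ge1$ (number of regimes); probabilities $p_1,\dots,p_N\ge 0$ with $\sum_i p_i=1$; algorithmic losses $a_1,\dots,a_N\ge 0$ and unaided-human losses $h_1,\dots,h_N\ge0$; and a combining function $c:[0,\infty)^2\to\mathbb{R}$ satisfying $\min(a,h)\le c(a,h)\le\max(a,h)$ for all $a,h\ge0$, where $c(a_i,h_i)$ is the loss of the combined system in regime $i$. Write $A=\sum_i p_i a_i$ and $H=\sum_i p_i h_i$. The system exhibits complementarity if $\sum_{i=1}^N p_i\,c(a_i,h_i)<\min(A,H)$. *)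

theory Defs
  imports Main "HOL.Real"
begin

definition human_algorithm_system ::
  "nat \<Rightarrow> (nat \<Rightarrow> real) \<Rightarrow> (nat \<Rightarrow> real) \<Rightarrow> (nat \<Rightarrow> real) \<Rightarrow> (real \<Rightarrow> real \<Rightarrow> real) \<Rightarrow> bool"
where
  "human_algorithm_system N p a h c \<longleftrightarrow>
     N \<ge> 1 \<and>
     (\<forall>i\<in>{1..N}. p i \<ge> 0) \<and> (\<Sum>i=1..N. p i) = 1 \<and>
     (\<forall>i\<in>{1..N}. a i \<ge> 0) \<and> (\<forall>i\<in>{1..N}. h i \<ge> 0) \<and>
     (\<forall>x y. x \<ge> 0 \<longrightarrow> y \<ge> 0 \<longrightarrow> min x y \<le> c x y \<and> c x y \<le> max x y)"

definition exhibits_complementarity ::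
  "nat \<Rightarrow> (nat \<Rightarrow> real) \<Rightarrow> (nat \<Rightarrow> real) \<Rightarrow> (nat \<Rightarrow> real) \<Rightarrow> (real \<Rightarrow> real \<Rightarrow> real) \<Rightarrow> bool"
where
  "exhibits_complementarity N p a h c \<longleftrightarrow>
     (\<Sum>i=1..N. p i * c (a i) (h i)) <
       min (\<Sum>i=1..N. p i * a i) (\<Sum>i=1..N. p i * h i)"

end

theory Submission
  imports Defs
begin

text \<open>The combined loss in each regime is at least the pointwise minimum of the two losses,
  so the combined expected loss is at least the expected pointwise minimum. If one of the two
  agents is better in every regime, that pointwise minimum is always attained by the same agent,
  and its expectation is exactly min A H.\<close>

lemma weighted_sum_mono:
  fixes p f g :: "'i \<Rightarrow> 'b::linordered_idom"
  assumes "\<And>i. i \<in> S \<Longrightarrow> p i \<ge> 0" and "\<And>i. i \<in> S \<Longrightarrow> f i \<le> g i"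
  shows "(\<Sum>i\<in>S. p i * f i) \<le> (\<Sum>i\<in>S. p i * g i)"
  using assms by (intro sum_mono mult_left_mono) auto

lemma weighted_sum_min_eq_min_weighted_sum:
  fixes p a h :: "'i \<Rightarrow> 'b::linordered_idom"
  assumes p_nonneg: "\<And>i. i \<in> S \<Longrightarrow> p i \<ge> 0"
    and ordered: "(\<forall>i\<in>S. a i \<le> h i) \<or> (\<forall>i\<in>S. a i \<ge> h i)"
  shows "(\<Sum>i\<in>S. p i * min (a i) (h i)) = min (\<Sum>i\<in>S. p i * a i) (\<Sum>i\<in>S. p i * h i)"
  using ordered
proof
  assume le: "\<forall>i\<in>S. a i \<le> h i"
  then have "(\<Sum>i\<in>S. p i * a i) \<le> (\<Sum>i\<in>S. p i * h i)"
    using p_nonneg by (intro weighted_sum_mono) auto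
  moreover have "(\<Sum>i\<in>S. p i * min (a i) (h i)) = (\<Sum>i\<in>S. p i * a i)"
    using le by (intro sum.cong) (auto simp: min.absorb1)
  ultimately show ?thesis by (simp add: min.absorb1)
next
  assume ge: "\<forall>i\<in>S. a i \<ge> h i"
  then have "(\<Sum>i\<in>S. p i * h i) \<le> (\<Sum>i\<in>S. p i * a i)"
    using p_nonneg by (intro weighted_sum_mono) auto
  moreover have "(\<Sum>i\<in>S. p i * min (a i) (h i)) = (\<Sum>i\<in>S. p i * h i)"
    using ge by (intro sum.cong) (auto simp: min.absorb2)
  ultimately show ?thesis by (simp add: min.absorb2)
qed

lemma weighted_min_loss_le_combined_loss:
  assumes "human_algorithm_system N p a h c"
  shows "(\<Sum>i=1..N. p i * min (a i) (h i)) \<le> (\<Sum>i=1..N. p i * c (a i) (h i))"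
  using assms unfolding human_algorithm_system_def by (intro weighted_sum_mono) auto

theorem lemma3:
  fixes N :: nat and p a h :: "nat \<Rightarrow> real" and c :: "real \<Rightarrow> real \<Rightarrow> real"
  assumes "human_algorithm_system N p a h c"
    and "(\<forall>i\<in>{1..N}. a i \<le> h i) \<or> (\<forall>i\<in>{1..N}. a i \<ge> h i)"
  shows "\<not> exhibits_complementarity N p a h c"
proof -
  have "min (\<Sum>i=1..N. p i * a i) (\<Sum>i=1..N. p i * h i) = (\<Sum>i=1..N. p i * min (a i) (h i))"
    using assms unfolding human_algorithm_system_def
    by (intro weighted_sum_min_eq_min_weighted_sum[symmetric]) auto
  also have "\<dots> \<le> (\<Sum>i=1..N. p i * c (a i) (h i))"
    using weighted_min_loss_le_combined_loss[OF assms(1)] .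
  finally show ?thesis unfolding exhibits_complementarity_def by linarith
qed

end
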